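(* Let $\mathfrak g$ be a unimodular Lie algebra with a Hermitian structure $(J,g)$ and let $e$ be a unitary frame. If $D^j_{ik}=D^j_{ki}$ for all $i,j,k$, then the Chern scalar curvature satisfies $s=-\sum_{r,s,t}|D^t_{rs}|^2\le0$, with $s<0$ unless $D=0$. If $D^j_{ik}=-D^j_{ki}$ for all $i,j,k$, then $s=\sum_{r,s,t}|D^t_{rs}|^2\ge0$, with $s>0$ unless $D=0$.
   Context: Hermitian structure on a real Lie algebra $\mathfrak g$ of dimension $2n$: integrable almost complex structure $J$ and $J$-invariant inner product $g$. Unimodular: $\operatorname{tr}\mathrm{ad}_x=0$ for all $x$. $\mathfrak g^{1,0}=\{x-\sqrt{-1}Jx\}$, $g$ extended bilinearly, unitary frame $e_1,\dots,e_n$. $D^j_{ik}=g([\bar e_j,e_k],e_i)$. $R$ is the curvature of the Chern connection (unique connection preserving $J,g$ with torsion of vanishing $(1,1)$-part), $R_{i\bar jk\bar\ell}=g(R(e_i,\bar e_j)e_k,\bar e_\ell)$, and the Chern scalar curvature is $s=\sum_{i,r}R_{i\bar ir\bar r}$. *)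

theory Defs
  imports "HOL-Analysis.Analysis"
begin

definition lie_algebra :: "('a::real_vector \<Rightarrow> 'a \<Rightarrow> 'a) \<Rightarrow> bool" where
  "lie_algebra br \<longleftrightarrow> bilinear br \<and> (\<forall>x y. br x y = - br y x)
     \<and> (\<forall>x y z. br x (br y z) + br y (br z x) + br z (br x y) = 0)"

definition unimodular :: "('a::euclidean_space \<Rightarrow> 'a \<Rightarrow> 'a) \<Rightarrow> bool" where
  "unimodular br \<longleftrightarrow> (\<forall>x. (\<Sum>b\<in>Basis. inner (br x b) b) = 0)"

definition integrable_acs :: "('a::real_vector \<Rightarrow> 'a \<Rightarrow> 'a) \<Rightarrow> ('a \<Rightarrow> 'a) \<Rightarrow> bool" where
  "integrable_acs br J \<longleftrightarrow> linear J \<and> (\<forall>x. J (J x) = - x)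
     \<and> (\<forall>x y. br (J x) (J y) - J (br (J x) y) - J (br x (J y)) - br x y = 0)"

definition herm_metric :: "('a::real_vector \<Rightarrow> 'a \<Rightarrow> real) \<Rightarrow> ('a \<Rightarrow> 'a) \<Rightarrow> bool" where
  "herm_metric g J \<longleftrightarrow> bilinear g \<and> (\<forall>x y. g x y = g y x) \<and> (\<forall>x. x \<noteq> 0 \<longrightarrow> g x x > 0)
     \<and> (\<forall>x y. g (J x) (J y) = g x y)"

definition hermitian_lie_algebra ::
  "('a::euclidean_space \<Rightarrow> 'a \<Rightarrow> 'a) \<Rightarrow> ('a \<Rightarrow> 'a) \<Rightarrow> ('a \<Rightarrow> 'a \<Rightarrow> real) \<Rightarrow> bool" where
  "hermitian_lie_algebra br J g \<longleftrightarrow> lie_algebra br \<and> integrable_acs br J \<and> herm_metric g J"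

text \<open>An element (x, y) of 'a \<times> 'a represents x + sqrt(-1) y in the complexification.\<close>

definition cconj :: "'a::real_vector \<times> 'a \<Rightarrow> 'a \<times> 'a" where
  "cconj X = (fst X, - snd X)"

definition cbil :: "('a::real_vector \<Rightarrow> 'a \<Rightarrow> 'a) \<Rightarrow> 'a \<times> 'a \<Rightarrow> 'a \<times> 'a \<Rightarrow> 'a \<times> 'a" where
  "cbil B X Y = (B (fst X) (fst Y) - B (snd X) (snd Y), B (fst X) (snd Y) + B (snd X) (fst Y))"

text \<open>Complex-bilinear extension of the real bilinear form g.\<close>

definition cform :: "('a::real_vector \<Rightarrow> 'a \<Rightarrow> real) \<Rightarrow> 'a \<times> 'a \<Rightarrow> 'a \<times> 'a \<Rightarrow> complex" where
  "cform g X Y = Complex (g (fst X) (fst Y) - g (snd X) (snd Y)) (g (fst X) (snd Y) + g (snd X) (fst Y))"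

definition g10 :: "('a::real_vector \<Rightarrow> 'a) \<Rightarrow> ('a \<times> 'a) set" where
  "g10 J = {(x, - J x) | x. True}"

definition unitary_frame :: "('a::real_vector \<Rightarrow> 'a) \<Rightarrow> ('a \<Rightarrow> 'a \<Rightarrow> real) \<Rightarrow> nat \<Rightarrow> (nat \<Rightarrow> 'a \<times> 'a) \<Rightarrow> bool" where
  "unitary_frame J g n e \<longleftrightarrow> (\<forall>i<n. e i \<in> g10 J)
     \<and> (\<forall>i<n. \<forall>j<n. cform g (e i) (cconj (e j)) = (if i = j then 1 else 0))"

text \<open>D^j_{ik} = g([conj e_j, e_k], e_i).\<close>

definition Dcoef :: "('a::real_vector \<Rightarrow> 'a \<Rightarrow> 'a) \<Rightarrow> ('a \<Rightarrow> 'a \<Rightarrow> real) \<Rightarrow> (nat \<Rightarrow> 'a \<times> 'a)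
    \<Rightarrow> nat \<Rightarrow> nat \<Rightarrow> nat \<Rightarrow> complex" where
  "Dcoef br g e j i k = cform g (cbil br (cconj (e j)) (e k)) (e i)"

text \<open>A (left-invariant) connection on the Lie algebra is a bilinear map
  nab with nab x y = nabla_x y.  Torsion T(x,y) = nabla_x y - nabla_y x - [x,y].\<close>

definition torsion :: "('a::real_vector \<Rightarrow> 'a \<Rightarrow> 'a) \<Rightarrow> ('a \<Rightarrow> 'a \<Rightarrow> 'a) \<Rightarrow> 'a \<Rightarrow> 'a \<Rightarrow> 'a" where
  "torsion br nab x y = nab x y - nab y x - br x y"

definition chern_connection ::
  "('a::real_vector \<Rightarrow> 'a \<Rightarrow> 'a) \<Rightarrow> ('a \<Rightarrow> 'a) \<Rightarrow> ('a \<Rightarrow> 'a \<Rightarrow> real) \<Rightarrow> ('a \<Rightarrow> 'a \<Rightarrow> 'a) \<Rightarrow> bool" where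
  "chern_connection br J g nab \<longleftrightarrow> bilinear nab
     \<and> (\<forall>x y. nab x (J y) = J (nab x y))
     \<and> (\<forall>x y z. g (nab x y) z + g y (nab x z) = 0)
     \<and> (\<forall>Z\<in>g10 J. \<forall>W\<in>g10 J. cbil (torsion br nab) Z (cconj W) = (0, 0))"

definition ccurv :: "('a::real_vector \<Rightarrow> 'a \<Rightarrow> 'a) \<Rightarrow> ('a \<Rightarrow> 'a \<Rightarrow> 'a)
    \<Rightarrow> 'a \<times> 'a \<Rightarrow> 'a \<times> 'a \<Rightarrow> 'a \<times> 'a \<Rightarrow> 'a \<times> 'a" where
  "ccurv br nab X Y Z = cbil nab X (cbil nab Y Z) - cbil nab Y (cbil nab X Z) - cbil nab (cbil br X Y) Z"

definition Rcoef :: "('a::real_vector \<Rightarrow> 'a \<Rightarrow> 'a) \<Rightarrow> ('a \<Rightarrow> 'a \<Rightarrow> real) \<Rightarrow> ('a \<Rightarrow> 'a \<Rightarrow> 'a)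
    \<Rightarrow> (nat \<Rightarrow> 'a \<times> 'a) \<Rightarrow> nat \<Rightarrow> nat \<Rightarrow> nat \<Rightarrow> nat \<Rightarrow> complex" where
  "Rcoef br g nab e i j k l = cform g (ccurv br nab (e i) (cconj (e j)) (e k)) (cconj (e l))"

definition chern_scalar :: "('a::real_vector \<Rightarrow> 'a \<Rightarrow> 'a) \<Rightarrow> ('a \<Rightarrow> 'a \<Rightarrow> real) \<Rightarrow> ('a \<Rightarrow> 'a \<Rightarrow> 'a)
    \<Rightarrow> nat \<Rightarrow> (nat \<Rightarrow> 'a \<times> 'a) \<Rightarrow> complex" where
  "chern_scalar br g nab n e = (\<Sum>i<n. \<Sum>r<n. Rcoef br g nab e i i r r)"

end

theory Submission
  imports Defs
begin

text \<open>
  Write \<nabla> for the Chern connection and e_k' for conj e_k.  Metric compatibility moves \<nabla>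
  to the other slot of g, where the vanishing of the (1,1)-torsion turns it into a bracket; hence
  the traces of \<nabla>(e_k) and \<nabla>(e_k') on g^{1,0} are b_k = \<Sum>_r D^r_{rk} and -conj b_k.
  Traces of commutators vanish, so s = - \<Sum>_i tr \<nabla>([e_i, e_i']), and expanding the bracket in
  the frame gives s = - \<Sum>_k (conj a_k b_k + a_k conj b_k) with a_k = \<Sum>_i D^i_{ki}.
  Pairing the Jacobi identity for e_l, e_j, e_l' with e_j' and summing, unimodularity identifies
  this with \<Sum> D^l_{kj} conj D^l_{jk}.  Thus s = - \<Sum> D^l_{kj} conj D^l_{jk}, which is
  \<mp>\<Sum> |D|^2 when D is symmetric, resp. antisymmetric, in its lower indices.
\<close>

section \<open>Complexification\<close>

definition cscale :: "complex \<Rightarrow> 'a::real_vector \<times> 'a \<Rightarrow> 'a \<times> 'a" where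
  "cscale c X = (Re c *\<^sub>R fst X - Im c *\<^sub>R snd X, Re c *\<^sub>R snd X + Im c *\<^sub>R fst X)"

lemma cscale_zero [simp]: "cscale 0 X = 0"
  by (simp add: cscale_def zero_prod_def)

lemma cconj_cconj [simp]: "cconj (cconj X) = X"
  by (simp add: cconj_def)

lemma bilinear_sum_left: "bilinear h \<Longrightarrow> h (\<Sum>i\<in>I. f i) y = (\<Sum>i\<in>I. h (f i) y)"
  using linear_sum[of "\<lambda>x. h x y"] by (simp add: bilinear_def)

context
  fixes B :: "'a::real_vector \<Rightarrow> 'a \<Rightarrow> 'a"
  assumes B: "bilinear B"
begin

lemma cbil_add_left: "cbil B (X + Y) Z = cbil B X Z + cbil B Y Z"
  by (simp add: cbil_def bilinear_ladd[OF B] algebra_simps)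

lemma cbil_add_right: "cbil B Z (X + Y) = cbil B Z X + cbil B Z Y"
  by (simp add: cbil_def bilinear_radd[OF B] algebra_simps)

lemma cbil_zero_right: "cbil B Z 0 = 0"
  by (simp add: cbil_def bilinear_rzero[OF B] zero_prod_def)

lemma cbil_cscale_left: "cbil B (cscale c X) Z = cscale c (cbil B X Z)"
  by (simp add: cbil_def cscale_def bilinear_lsub[OF B] bilinear_ladd[OF B] bilinear_lmul[OF B]
      algebra_simps)

lemma cbil_cscale_right: "cbil B Z (cscale c X) = cscale c (cbil B Z X)"
  by (simp add: cbil_def cscale_def bilinear_rsub[OF B] bilinear_radd[OF B] bilinear_rmul[OF B]
      algebra_simps)

lemma cbil_sum_right: "cbil B Z (\<Sum>i\<in>I. f i) = (\<Sum>i\<in>I. cbil B Z (f i))"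
  by (induction I rule: infinite_finite_induct) (auto simp: cbil_zero_right cbil_add_right)

lemma cbil_cconj: "cbil B (cconj X) (cconj Y) = cconj (cbil B X Y)"
  by (simp add: cbil_def cconj_def bilinear_lneg[OF B] bilinear_rneg[OF B])

lemma cbil_antisym:
  assumes "\<And>x y. B x y = - B y x"
  shows "cbil B X Y = - cbil B Y X"
  using assms[of "fst X" "fst Y"] assms[of "snd X" "snd Y"] assms[of "fst X" "snd Y"]
    assms[of "snd X" "fst Y"]
  by (simp add: cbil_def prod_eq_iff)

lemma cbil_jacobi:
  assumes jacobi: "\<And>x y z. B x (B y z) + B y (B z x) + B z (B x y) = 0"
  shows "cbil B X (cbil B Y Z) + cbil B Y (cbil B Z X) + cbil B Z (cbil B X Y) = 0"
proof -
  define jac where "jac x y z = B x (B y z) + B y (B z x) + B z (B x y)" for x y z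
  obtain x1 x2 y1 y2 z1 z2 where X: "X = (x1, x2)" and Y: "Y = (y1, y2)" and Z: "Z = (z1, z2)"
    by (cases X, cases Y, cases Z) auto
  have "fst (cbil B X (cbil B Y Z) + cbil B Y (cbil B Z X) + cbil B Z (cbil B X Y))
      = jac x1 y1 z1 - jac x1 y2 z2 - jac x2 y1 z2 - jac x2 y2 z1"
    by (simp add: X Y Z cbil_def jac_def bilinear_radd[OF B] bilinear_rsub[OF B] algebra_simps)
  moreover have "snd (cbil B X (cbil B Y Z) + cbil B Y (cbil B Z X) + cbil B Z (cbil B X Y))
      = jac x1 y1 z2 + jac x1 y2 z1 + jac x2 y1 z1 - jac x2 y2 z2"
    by (simp add: X Y Z cbil_def jac_def bilinear_radd[OF B] bilinear_rsub[OF B] algebra_simps)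
  ultimately show ?thesis
    by (simp add: jac_def jacobi prod_eq_iff)
qed

end

context
  fixes g :: "'a::real_vector \<Rightarrow> 'a \<Rightarrow> real"
  assumes g: "bilinear g"
begin

lemma cform_add_left: "cform g (X + Y) Z = cform g X Z + cform g Y Z"
  by (simp add: cform_def bilinear_ladd[OF g] complex_eq_iff)

lemma cform_add_right: "cform g Z (X + Y) = cform g Z X + cform g Z Y"
  by (simp add: cform_def bilinear_radd[OF g] complex_eq_iff)

lemma cform_diff_left: "cform g (X - Y) Z = cform g X Z - cform g Y Z"
  by (simp add: cform_def bilinear_lsub[OF g] complex_eq_iff)

lemma cform_zero_left: "cform g 0 Z = 0"
  by (simp add: cform_def bilinear_lzero[OF g] complex_eq_iff)

lemma cform_neg_left: "cform g (- X) Y = - cform g X Y"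
  using cform_diff_left[of 0 X Y] by (simp add: cform_zero_left)

lemma cform_cscale_left: "cform g (cscale c X) Z = c * cform g X Z"
  by (simp add: cform_def cscale_def bilinear_lsub[OF g] bilinear_ladd[OF g] bilinear_lmul[OF g]
      complex_eq_iff algebra_simps)

lemma cform_sum_left: "cform g (\<Sum>i\<in>I. f i) Z = (\<Sum>i\<in>I. cform g (f i) Z)"
  by (induction I rule: infinite_finite_induct) (auto simp: cform_zero_left cform_add_left)

lemma cform_cconj: "cform g (cconj X) (cconj Y) = cnj (cform g X Y)"
  by (simp add: cform_def cconj_def bilinear_lneg[OF g] bilinear_rneg[OF g] complex_eq_iff)

lemma cform_cbil_skew:
  assumes skew: "\<And>a b c. g (N a b) c = - g b (N a c)"
  shows "cform g (cbil N X Y) Z = - cform g Y (cbil N X Z)"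
proof -
  define sk where "sk a b c = g (N a b) c + g b (N a c)" for a b c
  obtain x1 x2 y1 y2 z1 z2 where X: "X = (x1, x2)" and Y: "Y = (y1, y2)" and Z: "Z = (z1, z2)"
    by (cases X, cases Y, cases Z) auto
  have "Re (cform g (cbil N X Y) Z + cform g Y (cbil N X Z))
      = sk x1 y1 z1 - sk x2 y2 z1 - sk x1 y2 z2 - sk x2 y1 z2"
    by (simp add: X Y Z cform_def cbil_def sk_def bilinear_ladd[OF g] bilinear_lsub[OF g]
        bilinear_radd[OF g] bilinear_rsub[OF g] algebra_simps)
  moreover have "Im (cform g (cbil N X Y) Z + cform g Y (cbil N X Z))
      = sk x1 y1 z2 + sk x2 y1 z1 + sk x1 y2 z1 - sk x2 y2 z2"
    by (simp add: X Y Z cform_def cbil_def sk_def bilinear_ladd[OF g] bilinear_lsub[OF g]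
        bilinear_radd[OF g] bilinear_rsub[OF g] algebra_simps)
  ultimately have "cform g (cbil N X Y) Z + cform g Y (cbil N X Z) = 0"
    by (simp add: sk_def skew complex_eq_iff)
  then show ?thesis
    by (simp add: eq_neg_iff_add_eq_0)
qed

end

lemma cform_commute: "(\<And>x y. g x y = g y x) \<Longrightarrow> cform g X Y = cform g Y X"
  by (simp add: cform_def complex_eq_iff)

section \<open>Expansion in bases\<close>

lemma sum_Basis_bilinear_linear:
  fixes g :: "'a::euclidean_space \<Rightarrow> 'b::real_vector \<Rightarrow> real"
  assumes "bilinear g" "linear L"
  shows "(\<Sum>b\<in>Basis. inner x b * g (L b) y) = g (L x) y"
proof -
  have "g (L x) y = g (L (\<Sum>b\<in>Basis. inner x b *\<^sub>R b)) y"
    by (simp add: euclidean_representation)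
  also have "\<dots> = (\<Sum>b\<in>Basis. inner x b * g (L b) y)"
    by (simp add: linear_sum[OF assms(2)] linear_scale[OF assms(2)] bilinear_sum_left[OF assms(1)]
        bilinear_lmul[OF assms(1)])
  finally show ?thesis ..
qed

lemma orthogonal_family_span_UNIV:
  fixes g :: "'a::euclidean_space \<Rightarrow> 'a \<Rightarrow> real" and w :: "'i \<Rightarrow> 'a"
  assumes g: "bilinear g" and fin: "finite I" and card: "card I = DIM('a)" and c: "c \<noteq> 0"
    and orth: "\<And>i j. i \<in> I \<Longrightarrow> j \<in> I \<Longrightarrow> g (w i) (w j) = (if i = j then c else 0)"
  shows "span (w ` I) = UNIV"
proof -
  have inj: "inj_on w I"
  proof (rule inj_onI)
    fix i j assume "i \<in> I" "j \<in> I" "w i = w j"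
    then show "i = j"
      using orth[of i i] orth[of i j] c by (auto split: if_splits)
  qed
  have "independent (w ` I)"
  proof (rule independent_if_scalars_zero)
    fix f v assume sum: "(\<Sum>v\<in>w ` I. f v *\<^sub>R v) = 0" and "v \<in> w ` I"
    then obtain j where j: "j \<in> I" "v = w j" by auto
    have "0 = g (\<Sum>i\<in>I. f (w i) *\<^sub>R w i) (w j)"
      using sum by (simp add: sum.reindex[OF inj] bilinear_lzero[OF g])
    also have "\<dots> = f (w j) * c"
      using j fin by (simp add: bilinear_sum_left[OF g] bilinear_lmul[OF g] orth if_distrib
          cong: if_cong)
    finally show "f v = 0" using c j by simp
  qed (use fin in simp)
  then have "dim (w ` I) = DIM('a)"
    using dim_span_eq_card_independent card card_image[OF inj] by (metis dim_span)
  then show ?thesis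
    using dim_eq_full by auto
qed

lemma orthogonal_expansion:
  fixes g :: "'a::euclidean_space \<Rightarrow> 'a \<Rightarrow> real" and w :: "'i \<Rightarrow> 'a"
  assumes g: "bilinear g" and pos: "\<And>x. x \<noteq> 0 \<Longrightarrow> g x x > 0"
    and fin: "finite I" and card: "card I = DIM('a)" and c: "c \<noteq> 0"
    and orth: "\<And>i j. i \<in> I \<Longrightarrow> j \<in> I \<Longrightarrow> g (w i) (w j) = (if i = j then c else 0)"
  shows "v = (\<Sum>i\<in>I. (g v (w i) / c) *\<^sub>R w i)"
proof -
  define p where "p = v - (\<Sum>i\<in>I. (g v (w i) / c) *\<^sub>R w i)"
  have p_w: "g p (w j) = 0" if "j \<in> I" for j
    using that fin c by (simp add: p_def bilinear_lsub[OF g] bilinear_sum_left[OF g]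
        bilinear_lmul[OF g] orth if_distrib cong: if_cong)
  have "g p y = 0" if "y \<in> span (w ` I)" for y
    using that by (induction rule: span_induct_alt)
      (auto simp: p_w bilinear_rzero[OF g] bilinear_radd[OF g] bilinear_rmul[OF g])
  then have "g p p = 0"
    using orthogonal_family_span_UNIV[OF g fin card c orth] by auto
  then show ?thesis
    using pos[of p] by (force simp: p_def)
qed

locale hermitian_lie =
  fixes br :: "'a::euclidean_space \<Rightarrow> 'a \<Rightarrow> 'a" and J :: "'a \<Rightarrow> 'a" and g :: "'a \<Rightarrow> 'a \<Rightarrow> real"
  assumes hermitian: "hermitian_lie_algebra br J g"
begin

abbreviation cbr where "cbr \<equiv> cbil br"
abbreviation cg where "cg \<equiv> cform g"

lemma bilinear_br: "bilinear br"
  using hermitian unfolding hermitian_lie_algebra_def lie_algebra_def by blast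

lemma br_antisym: "br x y = - br y x"
  using hermitian unfolding hermitian_lie_algebra_def lie_algebra_def by blast

lemma br_jacobi: "br x (br y z) + br y (br z x) + br z (br x y) = 0"
  using hermitian unfolding hermitian_lie_algebra_def lie_algebra_def by blast

lemma nijenhuis: "br (J x) (J y) - J (br (J x) y) - J (br x (J y)) - br x y = 0"
  using hermitian unfolding hermitian_lie_algebra_def integrable_acs_def by blast

lemma linear_J: "linear J"
  using hermitian unfolding hermitian_lie_algebra_def integrable_acs_def by blast

lemma J_J [simp]: "J (J x) = - x"
  using hermitian unfolding hermitian_lie_algebra_def integrable_acs_def by blast

lemma bilinear_g: "bilinear g"
  using hermitian unfolding hermitian_lie_algebra_def herm_metric_def by blast

lemma g_commute: "g x y = g y x"
  using hermitian unfolding hermitian_lie_algebra_def herm_metric_def by blast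

lemma g_pos: "x \<noteq> 0 \<Longrightarrow> g x x > 0"
  using hermitian unfolding hermitian_lie_algebra_def herm_metric_def by blast

lemma g_J_J [simp]: "g (J x) (J y) = g x y"
  using hermitian unfolding hermitian_lie_algebra_def herm_metric_def by blast

lemma g_J_left: "g (J x) y = - g x (J y)"
  using g_J_J[of x "J y"] by (simp add: bilinear_rneg[OF bilinear_g])

lemma cbr_antisym: "cbr X Y = - cbr Y X"
  using cbil_antisym[OF bilinear_br] br_antisym by blast

lemma cbr_jacobi: "cbr X (cbr Y Z) + cbr Y (cbr Z X) + cbr Z (cbr X Y) = 0"
  using cbil_jacobi[OF bilinear_br] br_jacobi by blast

definition g01 :: "('a \<times> 'a) set" where
  "g01 = {(x, J x) | x. True}"

lemma mem_g10_iff: "Z \<in> g10 J \<longleftrightarrow> snd Z = - J (fst Z)"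
  by (cases Z) (auto simp: g10_def)

lemma mem_g01_iff: "Z \<in> g01 \<longleftrightarrow> snd Z = J (fst Z)"
  by (cases Z) (auto simp: g01_def)

lemma cconj_mem_g01: "Z \<in> g10 J \<Longrightarrow> cconj Z \<in> g01"
  by (simp add: mem_g10_iff mem_g01_iff cconj_def)

lemma cconj_mem_g10: "Z \<in> g01 \<Longrightarrow> cconj Z \<in> g10 J"
  by (simp add: mem_g10_iff mem_g01_iff cconj_def linear_neg[OF linear_J])

lemma cg_g10_isotropic: "Z \<in> g10 J \<Longrightarrow> W \<in> g10 J \<Longrightarrow> cg Z W = 0"
  by (simp add: mem_g10_iff cform_def complex_eq_iff bilinear_lneg[OF bilinear_g]
      bilinear_rneg[OF bilinear_g] g_J_left)

lemma cg_g01_isotropic: "Z \<in> g01 \<Longrightarrow> W \<in> g01 \<Longrightarrow> cg Z W = 0"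
  using cform_cconj[OF bilinear_g, of "cconj Z" "cconj W"]
  by (simp add: cg_g10_isotropic cconj_mem_g10)

lemma cbr_g10_closed:
  assumes "Z \<in> g10 J" "W \<in> g10 J"
  shows "cbr Z W \<in> g10 J"
proof -
  obtain a b where Z: "Z = (a, - J a)" and W: "W = (b, - J b)"
    using assms by (cases Z, cases W) (auto simp: mem_g10_iff)
  have "J (br (J a) (J b) - br a b) = J (J (br (J a) b + br a (J b)))"
    using nijenhuis[of a b] by (simp add: algebra_simps linear_add[OF linear_J])
  then have "J (br a b - br (J a) (J b)) = br (J a) b + br a (J b)"
    by (simp add: linear_diff[OF linear_J] algebra_simps)
  then show ?thesis
    by (simp add: Z W mem_g10_iff cbil_def bilinear_lneg[OF bilinear_br]
        bilinear_rneg[OF bilinear_br] algebra_simps)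
qed

end

locale chern_hermitian_lie = hermitian_lie +
  fixes nab :: "'a \<Rightarrow> 'a \<Rightarrow> 'a"
  assumes chern: "chern_connection br J g nab"
begin

abbreviation cnab where "cnab \<equiv> cbil nab"

lemma bilinear_nab: "bilinear nab"
  using chern by (simp add: chern_connection_def)

lemma nab_J: "nab x (J y) = J (nab x y)"
  using chern by (simp add: chern_connection_def)

lemma cnab_g10: "Z \<in> g10 J \<Longrightarrow> cnab X Z \<in> g10 J"
  by (simp add: mem_g10_iff cbil_def bilinear_rneg[OF bilinear_nab] nab_J linear_diff[OF linear_J]
      linear_add[OF linear_J] linear_neg[OF linear_J])

lemma cnab_g01: "Z \<in> g01 \<Longrightarrow> cnab X Z \<in> g01"
  by (simp add: mem_g01_iff cbil_def nab_J linear_diff[OF linear_J] linear_add[OF linear_J])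

lemma cg_cnab_skew: "cg (cnab X Y) Z = - cg Y (cnab X Z)"
proof (rule cform_cbil_skew[OF bilinear_g])
  fix a b c
  show "g (nab a b) c = - g b (nab a c)"
    using chern by (simp add: chern_connection_def eq_neg_iff_add_eq_0)
qed

lemma cnab_swap_g10_cconj:
  assumes "Z \<in> g10 J" "W \<in> g10 J"
  shows "cnab Z (cconj W) = cnab (cconj W) Z + cbr Z (cconj W)"
proof -
  have "cbil (torsion br nab) Z (cconj W) = 0"
    using chern assms by (simp add: chern_connection_def zero_prod_def)
  moreover have "cbil (torsion br nab) Z (cconj W) = cnab Z (cconj W) - cnab (cconj W) Z - cbr Z (cconj W)"
    by (simp add: cbil_def torsion_def prod_eq_iff algebra_simps)
  ultimately show ?thesis
    by (simp add: algebra_simps)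
qed

end

locale chern_unitary_frame = chern_hermitian_lie +
  fixes n :: nat and e :: "nat \<Rightarrow> 'a \<times> 'a"
  assumes dim: "DIM('a) = 2 * n"
    and frame: "unitary_frame J g n e"
begin

abbreviation eb where "eb k \<equiv> cconj (e k)"
abbreviation D where "D \<equiv> Dcoef br g e"

definition u :: "nat \<Rightarrow> 'a" where
  "u k = fst (e k)"

lemma e_mem_g10: "k < n \<Longrightarrow> e k \<in> g10 J"
  using frame by (simp add: unitary_frame_def)

lemma eb_mem_g01: "k < n \<Longrightarrow> eb k \<in> g01"
  by (simp add: cconj_mem_g01 e_mem_g10)

lemma e_eq: "k < n \<Longrightarrow> e k = (u k, - J (u k))"
  using e_mem_g10 by (simp add: mem_g10_iff u_def prod_eq_iff)

lemma cg_e_eb: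
  "i < n \<Longrightarrow> j < n \<Longrightarrow> cg (e i) (eb j) = Complex (2 * g (u i) (u j)) (2 * g (u i) (J (u j)))"
  by (simp add: e_eq cform_def cconj_def bilinear_lneg[OF bilinear_g] bilinear_rneg[OF bilinear_g]
      g_J_left)

lemma
  assumes "i < n" "j < n"
  shows g_u_u: "g (u i) (u j) = (if i = j then 1/2 else 0)"
    and g_u_Ju: "g (u i) (J (u j)) = 0"
proof -
  have "Complex (2 * g (u i) (u j)) (2 * g (u i) (J (u j))) = (if i = j then 1 else 0)"
    using frame assms cg_e_eb[OF assms] by (simp add: unitary_frame_def)
  then show "g (u i) (u j) = (if i = j then 1/2 else 0)" "g (u i) (J (u j)) = 0"
    by (simp_all add: complex_eq_iff split: if_splits)
qed

lemma real_frame_expansion: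
  "v = (\<Sum>k<n. (2 * g v (u k)) *\<^sub>R u k + (2 * g v (J (u k))) *\<^sub>R J (u k))"
proof -
  define w where "w = (\<lambda>(k::nat, b::bool). if b then J (u k) else u k)"
  have "v = (\<Sum>i\<in>{..<n} \<times> UNIV. (g v (w i) / (1/2)) *\<^sub>R w i)"
  proof (rule orthogonal_expansion[OF bilinear_g g_pos])
    show "card ({..<n} \<times> (UNIV::bool set)) = DIM('a)"
      using dim by (simp add: card_cartesian_product)
    fix i j assume "i \<in> {..<n} \<times> (UNIV::bool set)" "j \<in> {..<n} \<times> (UNIV::bool set)"
    then show "g (w i) (w j) = (if i = j then 1/2 else 0)"
      by (cases i; cases j) (auto simp: w_def g_u_u g_u_Ju g_J_left bilinear_rneg[OF bilinear_g])
  qed auto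
  then show ?thesis
    by (simp add: sum.cartesian_product' UNIV_bool w_def algebra_simps)
qed

lemma frame_expansion: "X = (\<Sum>k<n. cscale (cg X (eb k)) (e k) + cscale (cg X (e k)) (eb k))"
proof -
  have "cscale (cg X (eb k)) (e k) + cscale (cg X (e k)) (eb k)
      = ((2 * g (fst X) (u k)) *\<^sub>R u k + (2 * g (fst X) (J (u k))) *\<^sub>R J (u k),
         (2 * g (snd X) (u k)) *\<^sub>R u k + (2 * g (snd X) (J (u k))) *\<^sub>R J (u k))" if "k < n" for k
    using that by (simp add: e_eq cscale_def cform_def cconj_def bilinear_rneg[OF bilinear_g]
        prod_eq_iff algebra_simps scaleR_2 flip: scaleR_scaleR)
  then have "(\<Sum>k<n. cscale (cg X (eb k)) (e k) + cscale (cg X (e k)) (eb k))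
      = (fst X, snd X)"
    by (simp add: prod_eq_iff fst_sum snd_sum real_frame_expansion[symmetric])
  then show ?thesis
    by simp
qed

lemma g10_frame_expansion: "Z \<in> g10 J \<Longrightarrow> Z = (\<Sum>k<n. cscale (cg Z (eb k)) (e k))"
  using frame_expansion[of Z] by (simp add: cg_g10_isotropic e_mem_g10)

lemma cg_cbr_frame_expansion:
  "cg (cbr X Y) Z = (\<Sum>k<n. cg Y (eb k) * cg (cbr X (e k)) Z + cg Y (e k) * cg (cbr X (eb k)) Z)"
  by (subst frame_expansion[of Y]) (simp add: cbil_sum_right[OF bilinear_br]
      cbil_add_right[OF bilinear_br] cbil_cscale_right[OF bilinear_br] cform_sum_left[OF bilinear_g]
      cform_add_left[OF bilinear_g] cform_cscale_left[OF bilinear_g])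

lemma trace_in_frame:
  assumes "linear L"
  shows "(\<Sum>b\<in>Basis. inner (L b) b) = (\<Sum>k<n. 2 * g (L (u k)) (u k) + 2 * g (L (J (u k))) (J (u k)))"
proof -
  have "(\<Sum>b\<in>Basis. inner (L b) b) = (\<Sum>b\<in>Basis. \<Sum>k<n. 2 * (inner (u k) b * g (L b) (u k))
      + 2 * (inner (J (u k)) b * g (L b) (J (u k))))"
    by (subst real_frame_expansion[of "L _"])
      (simp add: inner_sum_left inner_add_left mult.commute mult.left_commute)
  also have "\<dots> = (\<Sum>k<n. 2 * (\<Sum>b\<in>Basis. inner (u k) b * g (L b) (u k))
      + 2 * (\<Sum>b\<in>Basis. inner (J (u k)) b * g (L b) (J (u k))))"
    by (subst sum.swap) (simp add: sum.distrib sum_distrib_left)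
  finally show ?thesis
    by (simp add: sum_Basis_bilinear_linear[OF bilinear_g assms])
qed

lemma cbr_trace_vanishes:
  assumes "unimodular br"
  shows "(\<Sum>j<n. cg (cbr X (e j)) (eb j) + cg (cbr X (eb j)) (e j)) = 0"
proof -
  have lin: "linear (br y)" for y
    using bilinear_br by (simp add: bilinear_def)
  have "(\<Sum>j<n. cg (cbr X (e j)) (eb j) + cg (cbr X (eb j)) (e j))
      = (\<Sum>j<n. Complex (2 * g (br (fst X) (u j)) (u j) + 2 * g (br (fst X) (J (u j))) (J (u j)))
                        (2 * g (br (snd X) (u j)) (u j) + 2 * g (br (snd X) (J (u j))) (J (u j))))"
    by (rule sum.cong) (simp_all add: e_eq cbil_def cform_def cconj_def complex_eq_iff
        bilinear_rneg[OF bilinear_br] bilinear_lneg[OF bilinear_g] bilinear_rneg[OF bilinear_g]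
        bilinear_ladd[OF bilinear_g] bilinear_lsub[OF bilinear_g])
  also have "\<dots> = Complex (\<Sum>b\<in>Basis. inner (br (fst X) b) b) (\<Sum>b\<in>Basis. inner (br (snd X) b) b)"
    by (simp add: trace_in_frame[OF lin] complex_eq_iff Re_sum Im_sum)
  also have "\<dots> = 0"
    using assms by (simp add: unimodular_def complex_eq_iff)
  finally show ?thesis .
qed

end

section \<open>Traces of the Chern connection\<close>

context chern_unitary_frame
begin

definition chern_trace :: "'a \<times> 'a \<Rightarrow> complex" where
  "chern_trace X = (\<Sum>r<n. cg (cnab X (e r)) (eb r))"

definition Dtrace_fst :: "nat \<Rightarrow> complex" where
  "Dtrace_fst k = (\<Sum>r<n. D r r k)"

definition Dtrace_snd :: "nat \<Rightarrow> complex" where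
  "Dtrace_snd k = (\<Sum>i<n. D i k i)"

lemma chern_trace_add: "chern_trace (X + Y) = chern_trace X + chern_trace Y"
  by (simp add: chern_trace_def cbil_add_left[OF bilinear_nab] cform_add_left[OF bilinear_g]
      sum.distrib)

lemma chern_trace_cscale: "chern_trace (cscale c X) = c * chern_trace X"
  by (simp add: chern_trace_def cbil_cscale_left[OF bilinear_nab] cform_cscale_left[OF bilinear_g]
      sum_distrib_left)

lemma chern_trace_sum: "chern_trace (\<Sum>i\<in>I. f i) = (\<Sum>i\<in>I. chern_trace (f i))"
  by (induction I rule: infinite_finite_induct)
    (auto simp: chern_trace_add chern_trace_cscale[of 0 0, simplified])

lemma chern_trace_frame_expansion:
  "chern_trace X = (\<Sum>k<n. cg X (eb k) * chern_trace (e k) + cg X (e k) * chern_trace (eb k))"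
  by (subst frame_expansion[of X]) (simp add: chern_trace_sum chern_trace_add chern_trace_cscale)

lemma cg_cnab_g10_expansion:
  assumes "Z \<in> g10 J"
  shows "cg (cnab X Z) W = (\<Sum>l<n. cg Z (eb l) * cg (cnab X (e l)) W)"
proof -
  have "cnab X Z = cnab X (\<Sum>l<n. cscale (cg Z (eb l)) (e l))"
    using g10_frame_expansion[OF assms] by (rule arg_cong)
  then show ?thesis
    by (simp add: cbil_sum_right[OF bilinear_nab] cbil_cscale_right[OF bilinear_nab]
        cform_sum_left[OF bilinear_g] cform_cscale_left[OF bilinear_g])
qed

text \<open>\<nabla>(Y) preserves g^{1,0}, so the trace of \<nabla>(X) \<nabla>(Y) is the trace of the product of
  the matrices of \<nabla>(X) and \<nabla>(Y) in the frame.\<close>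

lemma chern_trace_product:
  "(\<Sum>r<n. cg (cnab X (cnab Y (e r))) (eb r))
    = (\<Sum>r<n. \<Sum>l<n. cg (cnab Y (e r)) (eb l) * cg (cnab X (e l)) (eb r))"
  by (rule sum.cong) (simp_all add: cg_cnab_g10_expansion cnab_g10 e_mem_g10)

lemma chern_trace_commutator:
  "(\<Sum>r<n. cg (cnab X (cnab Y (e r))) (eb r)) = (\<Sum>r<n. cg (cnab Y (cnab X (e r))) (eb r))"
  unfolding chern_trace_product by (subst sum.swap) (simp add: mult.commute)

lemma chern_scalar_eq_chern_trace:
  "chern_scalar br g nab n e = - (\<Sum>i<n. chern_trace (cbr (e i) (eb i)))"
  by (simp add: chern_scalar_def Rcoef_def ccurv_def cform_diff_left[OF bilinear_g] sum_subtractf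
      chern_trace_def chern_trace_commutator[of "e _" "eb _"] sum_negf)

lemma cg_cbr_e_eb_eb: "cg (cbr (e a) (eb b)) (eb c) = cnj (D a c b)"
  using cbil_cconj[OF bilinear_br, of "e a" "eb b"]
  by (simp add: Dcoef_def flip: cform_cconj[OF bilinear_g])

lemma cg_cbr_e_eb_e: "cg (cbr (e a) (eb b)) (e c) = - D b c a"
  by (subst cbr_antisym) (simp add: cform_neg_left[OF bilinear_g] Dcoef_def)

lemma cg_cbr_eb_e_eb: "cg (cbr (eb a) (e b)) (eb c) = - cnj (D b c a)"
  by (subst cbr_antisym) (simp add: cform_neg_left[OF bilinear_g] cg_cbr_e_eb_eb)

text \<open>Metric compatibility moves \<nabla> to the other slot, where the torsion condition replaces it
  by a bracket, up to a term in g^{1,0} that pairs to zero with e_r.\<close>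

lemma chern_trace_e: "k < n \<Longrightarrow> chern_trace (e k) = Dtrace_fst k"
  unfolding chern_trace_def Dtrace_fst_def
proof (rule sum.cong)
  fix r assume "k < n" "r \<in> {..<n}"
  then have "cg (cnab (e k) (e r)) (eb r) = - cg (e r) (cnab (eb r) (e k) + cbr (e k) (eb r))"
    by (simp add: cg_cnab_skew cnab_swap_g10_cconj e_mem_g10)
  also have "\<dots> = - cg (cbr (e k) (eb r)) (e r)"
    using \<open>k < n\<close> \<open>r \<in> {..<n}\<close>
    by (simp add: cform_add_right[OF bilinear_g] cg_g10_isotropic cnab_g10 e_mem_g10
        cform_commute[OF g_commute])
  finally show "cg (cnab (e k) (e r)) (eb r) = D r r k"
    by (simp add: cg_cbr_e_eb_e)
qed simp

lemma chern_trace_eb: "k < n \<Longrightarrow> chern_trace (eb k) = - cnj (Dtrace_fst k)"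
  unfolding chern_trace_def Dtrace_fst_def sum_negf[symmetric] cnj_sum
proof (rule sum.cong)
  fix r assume "k < n" "r \<in> {..<n}"
  then have "cnab (eb k) (e r) = cnab (e r) (eb k) - cbr (e r) (eb k)"
    by (simp add: cnab_swap_g10_cconj e_mem_g10)
  then have "cg (cnab (eb k) (e r)) (eb r) = cg (cnab (e r) (eb k)) (eb r) - cg (cbr (e r) (eb k)) (eb r)"
    by (simp add: cform_diff_left[OF bilinear_g])
  also have "cg (cnab (e r) (eb k)) (eb r) = 0"
    using \<open>k < n\<close> \<open>r \<in> {..<n}\<close> by (simp add: cg_g01_isotropic cnab_g01 eb_mem_g01)
  finally show "cg (cnab (eb k) (e r)) (eb r) = - cnj (D r r k)"
    by (simp add: cg_cbr_e_eb_eb)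
qed simp

lemma chern_trace_bracket:
  "i < n \<Longrightarrow> chern_trace (cbr (e i) (eb i))
    = (\<Sum>k<n. cnj (D i k i) * Dtrace_fst k + D i k i * cnj (Dtrace_fst k))"
  by (subst chern_trace_frame_expansion)
    (simp add: cg_cbr_e_eb_eb cg_cbr_e_eb_e chern_trace_e chern_trace_eb)

lemma chern_scalar_Dtrace:
  "chern_scalar br g nab n e
    = - (\<Sum>k<n. cnj (Dtrace_snd k) * Dtrace_fst k + Dtrace_snd k * cnj (Dtrace_fst k))"
proof -
  have "chern_scalar br g nab n e
      = - (\<Sum>i<n. \<Sum>k<n. cnj (D i k i) * Dtrace_fst k + D i k i * cnj (Dtrace_fst k))"
    by (simp add: chern_scalar_eq_chern_trace chern_trace_bracket)
  also have "(\<Sum>i<n. \<Sum>k<n. cnj (D i k i) * Dtrace_fst k + D i k i * cnj (Dtrace_fst k))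
      = (\<Sum>k<n. cnj (Dtrace_snd k) * Dtrace_fst k + Dtrace_snd k * cnj (Dtrace_fst k))"
    by (subst sum.swap) (simp add: Dtrace_snd_def sum.distrib sum_distrib_right cnj_sum)
  finally show ?thesis .
qed

end

section \<open>The Jacobi identity in a unitary frame\<close>

lemma sum_triple_product:
  "(\<Sum>l\<in>A. \<Sum>j\<in>B. \<Sum>k\<in>C. (f l k :: 'a::comm_semiring_0) * h j k)
    = (\<Sum>k\<in>C. (\<Sum>l\<in>A. f l k) * (\<Sum>j\<in>B. h j k))"
proof -
  have "(\<Sum>k\<in>C. (\<Sum>l\<in>A. f l k) * (\<Sum>j\<in>B. h j k)) = (\<Sum>k\<in>C. \<Sum>l\<in>A. \<Sum>j\<in>B. f l k * h j k)"
    by (simp add: sum_product)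
  also have "\<dots> = (\<Sum>l\<in>A. \<Sum>k\<in>C. \<Sum>j\<in>B. f l k * h j k)"
    by (rule sum.swap)
  also have "\<dots> = (\<Sum>l\<in>A. \<Sum>j\<in>B. \<Sum>k\<in>C. f l k * h j k)"
    by (simp add: sum.swap[of _ C])
  finally show ?thesis ..
qed

context chern_unitary_frame
begin

definition Ccoef :: "nat \<Rightarrow> nat \<Rightarrow> nat \<Rightarrow> complex" where
  "Ccoef j l k = cg (cbr (e l) (e k)) (eb j)"

lemma cg_cbr_e_cbr_e_eb:
  "cg (cbr (e l) (cbr (e j) (eb l))) (eb j)
    = (\<Sum>k<n. cnj (D j k l) * Ccoef j l k - D l k j * cnj (D l j k))"
  by (subst cg_cbr_frame_expansion) (simp add: cg_cbr_e_eb_eb cg_cbr_e_eb_e Ccoef_def)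

lemma cg_cbr_e_cbr_eb_e:
  "cg (cbr (e j) (cbr (eb l) (e l))) (eb j)
    = (\<Sum>k<n. - cnj (D l k l) * Ccoef j j k + D l k l * cnj (D j j k))"
  by (subst cg_cbr_frame_expansion) (simp add: cg_cbr_e_eb_eb cg_cbr_eb_e_eb Dcoef_def Ccoef_def)

lemma cg_cbr_eb_cbr_e_e:
  assumes "l < n" "j < n"
  shows "cg (cbr (eb l) (cbr (e l) (e j))) (eb j) = (\<Sum>k<n. - (Ccoef k l j * cnj (D k j l)))"
proof -
  have "cbr (e l) (e j) \<in> g10 J"
    using assms by (simp add: cbr_g10_closed e_mem_g10)
  then show ?thesis
    by (subst cg_cbr_frame_expansion)
      (auto intro!: sum.cong simp: cg_cbr_eb_e_eb Ccoef_def cg_g10_isotropic e_mem_g10)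
qed

text \<open>This is the only use of unimodularity: the trace of ad(e_k) on g^{1,0} is minus its trace
  on g^{0,1}.\<close>

lemma Ccoef_trace:
  assumes "unimodular br" "k < n"
  shows "(\<Sum>j<n. Ccoef j j k) = - Dtrace_fst k"
proof -
  have "(\<Sum>j<n. Ccoef j j k) = - (\<Sum>j<n. cg (cbr (e k) (e j)) (eb j))"
    unfolding Ccoef_def sum_negf[symmetric]
    by (rule sum.cong, simp) (subst cbr_antisym, simp add: cform_neg_left[OF bilinear_g])
  also have "(\<Sum>j<n. cg (cbr (e k) (e j)) (eb j)) = - (\<Sum>j<n. cg (cbr (e k) (eb j)) (e j))"
    using cbr_trace_vanishes[OF assms(1), of "e k"] by (simp add: sum.distrib eq_neg_iff_add_eq_0)
  finally show ?thesis
    by (simp add: cg_cbr_e_eb_e Dtrace_fst_def sum_negf)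
qed

lemma jacobi_frame_identity:
  assumes "l < n" "j < n"
  shows "(\<Sum>k<n. (cnj (D j k l) * Ccoef j l k - D l k j * cnj (D l j k))
      + (- cnj (D l k l) * Ccoef j j k + D l k l * cnj (D j j k)) + - (Ccoef k l j * cnj (D k j l))) = 0"
proof -
  have "cg (cbr (e l) (cbr (e j) (eb l)) + cbr (e j) (cbr (eb l) (e l)) + cbr (eb l) (cbr (e l) (e j)))
      (eb j) = 0"
    by (simp add: cbr_jacobi cform_zero_left[OF bilinear_g])
  then show ?thesis
    by (simp only: cform_add_left[OF bilinear_g] cg_cbr_e_cbr_e_eb cg_cbr_e_cbr_eb_e
        cg_cbr_eb_cbr_e_e[OF assms] sum.distrib[symmetric])
qed

lemma sum_D_cnj_D_transpose:
  assumes "unimodular br"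
  shows "(\<Sum>l<n. \<Sum>j<n. \<Sum>k<n. D l k j * cnj (D l j k))
    = (\<Sum>k<n. Dtrace_snd k * cnj (Dtrace_fst k) + cnj (Dtrace_snd k) * Dtrace_fst k)"
proof -
  define S where "S f = (\<Sum>l<n. \<Sum>j<n. \<Sum>k<n. f l j k)" for f :: "nat \<Rightarrow> nat \<Rightarrow> nat \<Rightarrow> complex"
  have "S (\<lambda>l j k. cnj (D j k l) * Ccoef j l k) - S (\<lambda>l j k. D l k j * cnj (D l j k))
      - S (\<lambda>l j k. cnj (D l k l) * Ccoef j j k) + S (\<lambda>l j k. D l k l * cnj (D j j k))
      - S (\<lambda>l j k. Ccoef k l j * cnj (D k j l)) = 0"
  proof -
    have "S (\<lambda>l j k. (cnj (D j k l) * Ccoef j l k - D l k j * cnj (D l j k))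
        + (- cnj (D l k l) * Ccoef j j k + D l k l * cnj (D j j k)) + - (Ccoef k l j * cnj (D k j l)))
        = 0"
      unfolding S_def by (intro sum.neutral ballI jacobi_frame_identity) simp_all
    then show ?thesis
      by (simp add: S_def sum.distrib sum_subtractf sum_negf algebra_simps)
  qed
  moreover have "S (\<lambda>l j k. Ccoef k l j * cnj (D k j l)) = S (\<lambda>l j k. cnj (D j k l) * Ccoef j l k)"
    \<comment> \<open>relabel \<open>(l, j, k) \<mapsto> (l, k, j)\<close>\<close>
    unfolding S_def by (subst (2) sum.swap) (simp add: mult.commute)
  moreover have "S (\<lambda>l j k. cnj (D l k l) * Ccoef j j k) = - (\<Sum>k<n. cnj (Dtrace_snd k) * Dtrace_fst k)"
    unfolding S_def sum_triple_product
    by (simp add: Ccoef_trace[OF assms] Dtrace_snd_def sum_negf)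
  moreover have "S (\<lambda>l j k. D l k l * cnj (D j j k)) = (\<Sum>k<n. Dtrace_snd k * cnj (Dtrace_fst k))"
    unfolding S_def sum_triple_product by (simp add: Dtrace_snd_def Dtrace_fst_def)
  ultimately show ?thesis
    by (simp add: S_def sum.distrib algebra_simps)
qed

lemma chern_scalar_Dcoef:
  assumes "unimodular br"
  shows "chern_scalar br g nab n e = - (\<Sum>l<n. \<Sum>j<n. \<Sum>k<n. D l k j * cnj (D l j k))"
  by (simp add: chern_scalar_Dtrace sum_D_cnj_D_transpose[OF assms] add.commute)

end

section \<open>Sign of the Chern scalar curvature\<close>

lemma sum_mult_cnj_eq_sum_cmod_sq:
  fixes D :: "nat \<Rightarrow> nat \<Rightarrow> nat \<Rightarrow> complex"
  shows "(\<Sum>l<n. \<Sum>j<n. \<Sum>k<n. D l k j * cnj (D l k j))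
    = complex_of_real (\<Sum>r<n. \<Sum>s<n. \<Sum>t<n. (cmod (D t r s))\<^sup>2)"
proof -
  have "(\<Sum>l<n. \<Sum>j<n. \<Sum>k<n. (cmod (D l k j))\<^sup>2) = (\<Sum>l<n. \<Sum>k<n. \<Sum>j<n. (cmod (D l k j))\<^sup>2)"
    by (rule sum.cong[OF refl], rule sum.swap)
  also have "\<dots> = (\<Sum>k<n. \<Sum>l<n. \<Sum>j<n. (cmod (D l k j))\<^sup>2)"
    by (rule sum.swap)
  also have "\<dots> = (\<Sum>r<n. \<Sum>s<n. \<Sum>t<n. (cmod (D t r s))\<^sup>2)"
    by (rule sum.cong[OF refl], rule sum.swap)
  finally show ?thesis
    unfolding complex_norm_square[symmetric] of_real_sum[symmetric] by (rule arg_cong)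
qed

lemma sum_cmod_sq_pos:
  fixes D :: "nat \<Rightarrow> nat \<Rightarrow> nat \<Rightarrow> complex"
  assumes "i < n" "j < n" "k < n" "D j i k \<noteq> 0"
  shows "0 < (\<Sum>r<n. \<Sum>s<n. \<Sum>t<n. (cmod (D t r s))\<^sup>2)"
  using assms by (intro sum_pos2[of _ i] sum_pos2[of _ k] sum_pos2[of _ j] sum_nonneg) auto

context chern_unitary_frame
begin

lemma chern_scalar_symmetric_D:
  assumes "unimodular br" and sym: "\<forall>i<n. \<forall>j<n. \<forall>k<n. D j i k = D j k i"
  shows "chern_scalar br g nab n e = - complex_of_real (\<Sum>r<n. \<Sum>s<n. \<Sum>t<n. (cmod (D t r s))\<^sup>2)"
proof -
  have "(\<Sum>l<n. \<Sum>j<n. \<Sum>k<n. D l k j * cnj (D l j k)) = (\<Sum>l<n. \<Sum>j<n. \<Sum>k<n. D l k j * cnj (D l k j))"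
    using sym by (intro sum.cong refl) (metis lessThan_iff)
  then show ?thesis
    by (simp add: chern_scalar_Dcoef[OF assms(1)] sum_mult_cnj_eq_sum_cmod_sq)
qed

lemma chern_scalar_antisymmetric_D:
  assumes "unimodular br" and antisym: "\<forall>i<n. \<forall>j<n. \<forall>k<n. D j i k = - D j k i"
  shows "chern_scalar br g nab n e = complex_of_real (\<Sum>r<n. \<Sum>s<n. \<Sum>t<n. (cmod (D t r s))\<^sup>2)"
proof -
  have "(\<Sum>l<n. \<Sum>j<n. \<Sum>k<n. D l k j * cnj (D l j k))
      = - (\<Sum>l<n. \<Sum>j<n. \<Sum>k<n. D l k j * cnj (D l k j))"
    unfolding sum_negf[symmetric] using antisym
    by (intro sum.cong refl) (metis lessThan_iff complex_cnj_minus mult_minus_right)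
  then show ?thesis
    by (simp add: chern_scalar_Dcoef[OF assms(1)] sum_mult_cnj_eq_sum_cmod_sq)
qed

end

theorem lemma4:
  fixes br :: "'a::euclidean_space \<Rightarrow> 'a \<Rightarrow> 'a"
    and J :: "'a \<Rightarrow> 'a" and g :: "'a \<Rightarrow> 'a \<Rightarrow> real"
    and nab :: "'a \<Rightarrow> 'a \<Rightarrow> 'a" and n :: nat and e :: "nat \<Rightarrow> 'a \<times> 'a"
  assumes dim: "DIM('a) = 2 * n"
    and herm: "hermitian_lie_algebra br J g"
    and unimod: "unimodular br"
    and frame: "unitary_frame J g n e"
    and chern: "chern_connection br J g nab"
  shows
   "((\<forall>i<n. \<forall>j<n. \<forall>k<n. Dcoef br g e j i k = Dcoef br g e j k i) \<longrightarrow>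
       chern_scalar br g nab n e
         = - complex_of_real (\<Sum>r<n. \<Sum>s<n. \<Sum>t<n. (cmod (Dcoef br g e t r s))\<^sup>2)
     \<and> Im (chern_scalar br g nab n e) = 0
     \<and> Re (chern_scalar br g nab n e) \<le> 0
     \<and> ((\<exists>i<n. \<exists>j<n. \<exists>k<n. Dcoef br g e j i k \<noteq> 0) \<longrightarrow> Re (chern_scalar br g nab n e) < 0))
  \<and> ((\<forall>i<n. \<forall>j<n. \<forall>k<n. Dcoef br g e j i k = - Dcoef br g e j k i) \<longrightarrow>
       chern_scalar br g nab n e
         = complex_of_real (\<Sum>r<n. \<Sum>s<n. \<Sum>t<n. (cmod (Dcoef br g e t r s))\<^sup>2)
     \<and> Im (chern_scalar br g nab n e) = 0
     \<and> Re (chern_scalar br g nab n e) \<ge> 0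
     \<and> ((\<exists>i<n. \<exists>j<n. \<exists>k<n. Dcoef br g e j i k \<noteq> 0) \<longrightarrow> Re (chern_scalar br g nab n e) > 0))"
proof -
  interpret chern_unitary_frame br J g nab n e
    using assms by unfold_locales
  let ?Q = "\<Sum>r<n. \<Sum>s<n. \<Sum>t<n. (cmod (Dcoef br g e t r s))\<^sup>2"
  let ?D_nonzero = "\<exists>i<n. \<exists>j<n. \<exists>k<n. Dcoef br g e j i k \<noteq> 0"
  have Q_nonneg: "?Q \<ge> 0"
    by (intro sum_nonneg) simp
  have Q_pos: "?Q > 0" if ?D_nonzero
    using that sum_cmod_sq_pos by blast
  have "Im z = 0 \<and> Re z \<le> 0 \<and> (?D_nonzero \<longrightarrow> Re z < 0)" if "z = - complex_of_real ?Q" for z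
    using that Q_nonneg Q_pos by auto
  moreover have "Im z = 0 \<and> Re z \<ge> 0 \<and> (?D_nonzero \<longrightarrow> Re z > 0)" if "z = complex_of_real ?Q" for z
    using that Q_nonneg Q_pos by auto
  ultimately show ?thesis
    using chern_scalar_symmetric_D[OF unimod] chern_scalar_antisymmetric_D[OF unimod] by blast
qed

end
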